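(* Let $n$ be a positive integer and $G$ a finite subgroup of $\mathrm{GL}_n(A)$, where $A=\mathbb{F}_q[t]$ and $q$ is a power of the prime $p$. Then the largest divisor of $\#G$ prime to $p$ divides $\prod_{s=1}^n(q^s-1)$. *)

theory Defs
  imports "HOL-Analysis.Analysis" "HOL-Computational_Algebra.Polynomial"
begin

definition prime_to_part :: "nat \<Rightarrow> nat \<Rightarrow> nat" where
  "prime_to_part m p = Max {d. d dvd m \<and> coprime d p}"

definition GL_subgroup :: "('a::comm_ring_1 ^ 'n ^ 'n) set \<Rightarrow> bool" where
  "GL_subgroup G \<longleftrightarrow> G \<subseteq> {M. invertible M} \<and> mat 1 \<in> G
     \<and> (\<forall>A\<in>G. \<forall>B\<in>G. A ** B \<in> G)
     \<and> (\<forall>A\<in>G. \<exists>B\<in>G. A ** B = mat 1 \<and> B ** A = mat 1)"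

end

(* Reduction modulo t, i.e. evaluation of the entries at t = 0, maps G homomorphically into
   GL_n(F_q), whose order is q^(n(n-1)/2) * prod_{s=1..n} (q^s - 1).  An element g of the kernel
   has the form 1 + X where t^k divides every entry of X, with k > 0 chosen maximal; then
   g^m = 1 + m X modulo t^(2k), so g^m = 1 with p not dividing m forces X = 0.  By Cauchy's theorem
   the kernel is therefore a p-group, and the prime-to-p part of #G divides #GL_n(F_q). *)

theory Submission
  imports Defs "HOL-Algebra.Sylow" "HOL-Number_Theory.Residues"
begin

lemma card_span_independent:
  fixes B :: "('a::{field,finite}^'n) set"
  assumes "vec.independent B"
  shows "card (vec.span B) = CARD('a) ^ card B"
proof -
  have fin: "finite B" using vec.finiteI_independent[OF assms] .
  define comb where "comb u = (\<Sum>v\<in>B. u v *s v)" for u :: "'a^'n \<Rightarrow> 'a"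
  have span: "vec.span B = comb ` (B \<rightarrow>\<^sub>E UNIV)"
  proof -
    have "comb u = comb (restrict u B)" for u
      unfolding comb_def by (rule sum.cong) auto
    then have "range comb = comb ` (B \<rightarrow>\<^sub>E UNIV)" by force
    then show ?thesis using vec.span_finite[OF fin] by (simp add: comb_def)
  qed
  have "inj_on comb (B \<rightarrow>\<^sub>E UNIV)"
  proof (rule inj_onI)
    fix u w assume u: "u \<in> B \<rightarrow>\<^sub>E UNIV" and w: "w \<in> B \<rightarrow>\<^sub>E UNIV" and "comb u = comb w"
    moreover have "(\<Sum>v\<in>B. (u v - w v) *s v) = comb u - comb w"
      by (simp add: comb_def sum_subtractf)
    ultimately have "(\<Sum>v\<in>B. (u v - w v) *s v) = 0" by simp
    then have "\<forall>v\<in>B. u v - w v = 0"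
      using assms unfolding vec.independent_explicit by (auto dest: spec[of _ "\<lambda>v. u v - w v"])
    with u w show "u = w" by (intro PiE_ext) auto
  qed
  then have "card (vec.span B) = card (B \<rightarrow>\<^sub>E (UNIV :: 'a set))"
    unfolding span by (rule card_image)
  then show ?thesis by (simp add: card_PiE)
qed

lemma card_independent_lists:
  "card {xs :: ('a::{field,finite}^'n) list. length xs = k \<and> distinct xs \<and> vec.independent (set xs)}
     = (\<Prod>i<k. CARD('a) ^ CARD('n) - CARD('a) ^ i)"
proof -
  define L :: "nat \<Rightarrow> ('a^'n) list set"
    where "L k = {xs. length xs = k \<and> distinct xs \<and> vec.independent (set xs)}" for k
  have fin: "finite (L k)" for k
    by (rule finite_subset[OF _ finite_lists_length_eq[of "UNIV :: ('a^'n) set" k]])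
       (auto simp: L_def)
  have "card (L k) = (\<Prod>i<k. CARD('a) ^ CARD('n) - CARD('a) ^ i)"
  proof (induction k)
    case 0
    have "L 0 = {[]}" by (auto simp: L_def vec.independent_empty)
    then show ?case by simp
  next
    case (Suc k)
    let ?cons = "\<lambda>(xs, v). v # xs"
    have "L (Suc k) = ?cons ` (SIGMA xs:L k. - vec.span (set xs))"
    proof
      show "L (Suc k) \<subseteq> ?cons ` (SIGMA xs:L k. - vec.span (set xs))"
      proof
        fix ys assume "ys \<in> L (Suc k)"
        then obtain v xs where "ys = v # xs" "xs \<in> L k" "v \<notin> vec.span (set xs)"
          by (cases ys) (auto simp: L_def vec.independent_insert)
        then show "ys \<in> ?cons ` (SIGMA xs:L k. - vec.span (set xs))" by force
      qed
    qed (auto simp: L_def dest: vec.span_base vec.independent_insertI)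
    moreover have "inj_on ?cons (SIGMA xs:L k. - vec.span (set xs))"
      by (auto simp: inj_on_def)
    ultimately have "card (L (Suc k)) = (\<Sum>xs\<in>L k. card (- vec.span (set xs)))"
      by (simp add: card_image fin)
    also have "\<dots> = (\<Sum>xs\<in>L k. CARD('a) ^ CARD('n) - CARD('a) ^ k)"
    proof (rule sum.cong)
      fix xs assume "xs \<in> L k"
      then have "card (vec.span (set xs)) = CARD('a) ^ k"
        by (simp add: L_def card_span_independent distinct_card)
      then show "card (- vec.span (set xs)) = CARD('a) ^ CARD('n) - CARD('a) ^ k"
        by (simp add: Compl_eq_Diff_UNIV card_Diff_subset)
    qed simp
    finally show ?case using Suc by simp
  qed
  then show ?thesis by (simp add: L_def)
qed

lemma independent_family_iff:
  fixes f :: "'i \<Rightarrow> 'a::field^'n"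
  assumes "finite I"
  shows "(\<forall>c. (\<Sum>i\<in>I. c i *s f i) = 0 \<longrightarrow> (\<forall>i\<in>I. c i = 0))
           \<longleftrightarrow> inj_on f I \<and> vec.independent (f ` I)"
proof
  assume indep: "\<forall>c. (\<Sum>i\<in>I. c i *s f i) = 0 \<longrightarrow> (\<forall>i\<in>I. c i = 0)"
  have "inj_on f I"
  proof (rule inj_onI, rule ccontr)
    fix i j assume ij: "i \<in> I" "j \<in> I" "f i = f j" "i \<noteq> j"
    define c :: "'i \<Rightarrow> 'a" where "c k = (if k = i then 1 else if k = j then -1 else 0)" for k
    have "c k *s f k = (if k = i then f i else 0) - (if k = j then f j else 0)" for k
      using ij by (simp add: c_def)
    then have "(\<Sum>k\<in>I. c k *s f k) = 0"
      using ij assms by (simp add: sum_subtractf)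
    with indep ij have "c i = 0" by blast
    then show False by (simp add: c_def)
  qed
  moreover have "vec.independent (f ` I)"
    unfolding vec.independent_explicit
  proof (intro conjI allI impI ballI)
    fix c v assume "(\<Sum>v\<in>f ` I. c v *s v) = 0" and "v \<in> f ` I"
    with \<open>inj_on f I\<close> indep show "c v = 0" by (auto simp: sum.reindex)
  qed (use assms in simp)
  ultimately show "inj_on f I \<and> vec.independent (f ` I)" ..
next
  assume "inj_on f I \<and> vec.independent (f ` I)"
  then have inj: "inj_on f I" and indep: "vec.independent (f ` I)" by auto
  show "\<forall>c. (\<Sum>i\<in>I. c i *s f i) = 0 \<longrightarrow> (\<forall>i\<in>I. c i = 0)"
  proof (intro allI impI ballI)
    fix c i assume "(\<Sum>i\<in>I. c i *s f i) = 0" and i: "i \<in> I"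
    moreover have "(\<Sum>i\<in>I. c i *s f i) = (\<Sum>v\<in>f ` I. c (the_inv_into I f v) *s v)"
      using inj by (simp add: sum.reindex the_inv_into_f_f)
    ultimately have "c (the_inv_into I f (f i)) = 0"
      using indep i by (auto simp: vec.independent_explicit)
    then show "c i = 0" using inj i by (simp add: the_inv_into_f_f)
  qed
qed

lemma invertible_iff_rows_independent:
  fixes M :: "'a::field^'n^'n"
  shows "invertible M \<longleftrightarrow> inj (($) M) \<and> vec.independent (range (($) M))"
  using independent_family_iff[of UNIV "($) M"]
  by (simp add: invertible_right_inverse matrix_right_invertible_independent_rows row_def)

lemma card_invertible_matrices:
  "card {M :: 'a::{field,finite}^'n^'n. invertible M}
     = (\<Prod>i<CARD('n). CARD('a) ^ CARD('n) - CARD('a) ^ i)"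
proof -
  obtain ns :: "'n list" where ns: "set ns = UNIV" "distinct ns"
    using finite_distinct_list[of "UNIV :: 'n set"] by auto
  have len: "length ns = CARD('n)" using ns distinct_card by fastforce
  have bij_ns: "bij_betw ((!) ns) {..<CARD('n)} UNIV"
    by (rule bij_betw_nth) (use ns len in auto)
  define ix where "ix = inv_into {..<CARD('n)} ((!) ns)"
  have ix: "ix i < CARD('n)" "ns ! ix i = i" for i
    using bij_ns unfolding ix_def bij_betw_def
    by (auto simp: f_inv_into_f) (metis UNIV_I inv_into_into lessThan_iff)
  have ix_nth: "ix (ns ! j) = j" if "j < CARD('n)" for j
    using bij_ns that by (simp add: ix_def bij_betw_def)
  define rows :: "'a^'n^'n \<Rightarrow> ('a^'n) list" where "rows M = map (($) M) ns" for M
  define mat_of :: "('a^'n) list \<Rightarrow> 'a^'n^'n" where "mat_of xs = (\<chi> i. xs ! ix i)" for xs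
  define L where "L = {xs :: ('a^'n) list. length xs = CARD('n) \<and> distinct xs \<and> vec.independent (set xs)}"
  have invertible_iff: "invertible M \<longleftrightarrow> distinct (rows M) \<and> vec.independent (set (rows M))" for M
    by (simp add: invertible_iff_rows_independent rows_def distinct_map ns image_image)
  have rows_mat_of: "rows (mat_of xs) = xs" if "xs \<in> L" for xs
    using that len by (auto intro!: nth_equalityI simp: L_def rows_def mat_of_def ix_nth)
  have "bij_betw rows {M. invertible M} L"
  proof (rule bij_betw_byWitness[where f' = mat_of])
    show "\<forall>M\<in>{M. invertible M}. mat_of (rows M) = M"
      by (simp add: rows_def mat_of_def vec_eq_iff len ix)
    show "\<forall>xs\<in>L. rows (mat_of xs) = xs" using rows_mat_of by blast
    show "rows ` {M. invertible M} \<subseteq> L"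
      using len invertible_iff by (auto simp: L_def rows_def)
    show "mat_of ` L \<subseteq> {M. invertible M}"
      using rows_mat_of invertible_iff by (force simp: L_def)
  qed
  then show ?thesis by (simp add: L_def bij_betw_same_card card_independent_lists)
qed

lemma prod_diff_powers_eq:
  fixes q n :: nat
  shows "(\<Prod>i<n. q ^ n - q ^ i) = (\<Prod>i<n. q ^ i) * (\<Prod>s=1..n. q ^ s - 1)"
proof -
  have "(\<Prod>i<n. q ^ n - q ^ i) = (\<Prod>i<n. q ^ i * (q ^ (n - i) - 1))"
  proof (rule prod.cong)
    fix i assume "i \<in> {..<n}"
    then have "q ^ n = q ^ i * q ^ (n - i)" by (simp flip: power_add)
    then show "q ^ n - q ^ i = q ^ i * (q ^ (n - i) - 1)"
      by (metis diff_mult_distrib2 mult.right_neutral)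
  qed simp
  also have "\<dots> = (\<Prod>i<n. q ^ i) * (\<Prod>i<n. q ^ (n - i) - 1)" by (rule prod.distrib)
  also have "(\<Prod>i<n. q ^ (n - i) - 1) = (\<Prod>s=1..n. q ^ s - 1)"
    by (rule prod.reindex_bij_witness[where i="\<lambda>s. n - s" and j="\<lambda>i. n - i"]) force+
  finally show ?thesis .
qed

definition eval_at_0 :: "'a::comm_ring_1 poly^'n^'m \<Rightarrow> 'a^'n^'m" where
  "eval_at_0 M = (\<chi> i j. poly (M $ i $ j) 0)"

lemma eval_at_0_mult: "eval_at_0 (A ** B) = eval_at_0 A ** eval_at_0 B"
  by (simp add: eval_at_0_def matrix_matrix_mult_def vec_eq_iff poly_sum)

lemma eval_at_0_mat_1: "eval_at_0 (mat 1) = mat 1"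
  by (simp add: eval_at_0_def mat_def vec_eq_iff)

primrec matpow :: "'a::semiring_1^'n^'n \<Rightarrow> nat \<Rightarrow> 'a^'n^'n" where
  "matpow M 0 = mat 1"
| "matpow M (Suc n) = matpow M n ** M"

lemma matrix_add_rdistrib: "(B + C) ** A = B ** A + C ** A"
  by (simp add: matrix_matrix_mult_def vec_eq_iff sum.distrib distrib_right)

lemma matpow_mat_1_plus:
  fixes X :: "'a::comm_ring_1^'n^'n"
  assumes "\<And>i j. d dvd X $ i $ j"
  obtains R where "\<And>i j. d * d dvd R $ i $ j"
    and "matpow (mat 1 + X) m = mat 1 + (\<chi> i j. of_nat m * X $ i $ j) + R"
proof -
  have "\<exists>R. (\<forall>i j. d * d dvd R $ i $ j) \<and>
          matpow (mat 1 + X) m = mat 1 + (\<chi> i j. of_nat m * X $ i $ j) + R"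
  proof (induction m)
    case 0
    show ?case by (rule exI[of _ 0]) (simp add: vec_eq_iff)
  next
    case (Suc m)
    then obtain R where R: "\<forall>i j. d * d dvd R $ i $ j"
      and pow: "matpow (mat 1 + X) m = mat 1 + (\<chi> i j. of_nat m * X $ i $ j) + R" by blast
    define S where "S = (\<chi> i j. of_nat m * X $ i $ j) + R"
    have "d dvd S $ i $ j" for i j
      using assms[of i j] R by (simp add: S_def) (meson dvd_add dvd_mult dvd_mult_left)
    then have SX: "d * d dvd (S ** X) $ i $ j" for i j
      unfolding matrix_matrix_mult_def using assms by (auto intro!: dvd_sum mult_dvd_mono)
    have "matpow (mat 1 + X) (Suc m) = (mat 1 + S) ** (mat 1 + X)"
      using pow by (simp add: S_def add.assoc)
    also have "\<dots> = mat 1 + X + S + S ** X"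
      by (simp add: matrix_add_ldistrib matrix_add_rdistrib algebra_simps)
    also have "\<dots> = mat 1 + (\<chi> i j. of_nat (Suc m) * X $ i $ j) + (R + S ** X)"
      by (simp add: S_def vec_eq_iff algebra_simps)
    finally show ?case using R SX by (intro exI[of _ "R + S ** X"]) auto
  qed
  then show ?thesis using that by blast
qed

lemma exists_lowest_coeff:
  fixes X :: "'a::comm_semiring_1 poly^'n^'m"
  assumes "X \<noteq> 0"
  shows "\<exists>i j k. Polynomial.coeff (X $ i $ j) k \<noteq> 0
                 \<and> (\<forall>i' j'. Polynomial.monom 1 k dvd X $ i' $ j')"
proof -
  obtain i0 j0 where "X $ i0 $ j0 \<noteq> 0" using assms by (metis vec_eq_iff zero_index)
  then have ex: "\<exists>k i j. Polynomial.coeff (X $ i $ j) k \<noteq> 0" by (metis leading_coeff_0_iff)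
  define k where "k = (LEAST k. \<exists>i j. Polynomial.coeff (X $ i $ j) k \<noteq> 0)"
  obtain i j where "Polynomial.coeff (X $ i $ j) k \<noteq> 0"
    using LeastI_ex[OF ex] unfolding k_def by blast
  moreover have "Polynomial.monom 1 k dvd X $ i' $ j'" for i' j'
    unfolding monom_1_dvd_iff' k_def using not_less_Least by blast
  ultimately show ?thesis by blast
qed

lemma kernel_eval_at_0_torsion_free:
  fixes g :: "'a::idom poly^'n^'n"
  assumes g0: "eval_at_0 g = mat 1" and pow: "matpow g m = mat 1" and m: "of_nat m \<noteq> (0::'a)"
  shows "g = mat 1"
proof (rule ccontr)
  define X where "X = g - mat 1"
  assume "g \<noteq> mat 1"
  then have "X \<noteq> 0" by (simp add: X_def)
  then obtain i j k where c: "Polynomial.coeff (X $ i $ j) k \<noteq> 0"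
    and dvd: "\<And>i j. Polynomial.monom 1 k dvd X $ i $ j"
    using exists_lowest_coeff[OF \<open>X \<noteq> 0\<close>] by blast
  have "Polynomial.coeff (X $ i $ j) 0 = 0" for i j
    using arg_cong[OF g0, of "\<lambda>M. M $ i $ j"]
    by (simp add: X_def eval_at_0_def mat_def poly_0_coeff_0)
  with c have "k > 0" by (metis gr0I)
  obtain R where R: "\<And>i j. Polynomial.monom 1 k * Polynomial.monom 1 k dvd R $ i $ j"
    and "matpow (mat 1 + X) m = mat 1 + (\<chi> i j. of_nat m * X $ i $ j) + R"
    using matpow_mat_1_plus[of "Polynomial.monom 1 k" X, OF dvd] by blast
  then have "(\<chi> i j. of_nat m * X $ i $ j) + R = 0"
    using pow by (simp add: X_def add.assoc)
  then have "((\<chi> i j. of_nat m * X $ i $ j) + R) $ i $ j = 0" by simp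
  then have "of_nat m * X $ i $ j + R $ i $ j = 0" by simp
  then have "Polynomial.coeff (of_nat m * X $ i $ j) k + Polynomial.coeff (R $ i $ j) k = 0"
    by (simp flip: coeff_add)
  moreover have "Polynomial.coeff (R $ i $ j) k = 0"
    using R[of i j] \<open>k > 0\<close> by (simp add: mult_monom monom_1_dvd_iff')
  ultimately have "of_nat m * Polynomial.coeff (X $ i $ j) k = 0"
    by (simp only: of_nat_mult_conv_smult coeff_smult add_0_right)
  with c m show False by simp
qed

lemma (in group) subgroup_obtain_elem_of_prime_order:
  assumes "subgroup K G" "finite K" "prime l" "l dvd card K"
  obtains x where "x \<in> K" "x \<noteq> \<one>" "x [^] l = \<one>"
proof -
  interpret K: group "G\<lparr>carrier := K\<rparr>" by (rule subgroup_imp_group[OF assms(1)])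
  obtain H where H: "subgroup H (G\<lparr>carrier := K\<rparr>)" "card H = l"
    using sylow_thm[OF \<open>prime l\<close> K.is_group, of 1 "card K div l"] assms(2,4)
    by (auto simp: Coset.order_def)
  then have "card H \<ge> 2" using prime_ge_2_nat[OF \<open>prime l\<close>] by simp
  moreover have "card H \<le> 1" if "H \<subseteq> {\<one>}"
    using card_mono[OF _ that] by simp
  ultimately obtain x where x: "x \<in> H" "x \<noteq> \<one>" by fastforce
  interpret H: group "G\<lparr>carrier := H\<rparr>"
    using K.subgroup_imp_group[OF H(1)] by simp
  have "x [^]\<^bsub>G\<lparr>carrier := H\<rparr>\<^esub> order (G\<lparr>carrier := H\<rparr>) = \<one>"
    using H.pow_order_eq_1 x(1) by simp
  then have "x [^] l = \<one>" using H(2) by (simp add: Coset.order_def nat_pow_def)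
  moreover have "x \<in> K" using x(1) subgroup.subset[OF H(1)] by auto
  ultimately show ?thesis using x(2) that by blast
qed

lemma (in group_hom) card_eq_card_kernel_mult_card:
  assumes "h ` carrier G = carrier H"
  shows "card (carrier G) = card (kernel G H h) * card (carrier H)"
proof -
  have "G Mod kernel G H h \<cong> H" by (rule FactGroup_iso[OF assms])
  then have "card (rcosets\<^bsub>G\<^esub> kernel G H h) = card (carrier H)"
    by (simp add: FactGroup_def iso_same_card[symmetric])
  with G.lagrange[OF subgroup_kernel] show ?thesis by (simp add: Coset.order_def mult.commute)
qed

definition matrix_group :: "('a::comm_ring_1^'n^'n) set \<Rightarrow> ('a^'n^'n) monoid" where
  "matrix_group S = \<lparr>carrier = S, mult = (**), one = mat 1\<rparr>"

lemma group_matrix_group: "GL_subgroup S \<Longrightarrow> group (matrix_group S)"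
  unfolding GL_subgroup_def by (rule groupI) (auto simp: matrix_group_def matrix_mul_assoc)

lemma nat_pow_matrix_group: "x [^]\<^bsub>matrix_group S\<^esub> n = matpow x n"
  by (induction n) (simp_all add: nat_pow_def matrix_group_def)

lemma GL_subgroup_invertible: "GL_subgroup {M :: 'a::comm_ring_1^'n^'n. invertible M}"
  unfolding GL_subgroup_def
proof (intro conjI ballI)
  fix A B :: "'a^'n^'n" assume A: "A \<in> {M. invertible M}" and B: "B \<in> {M. invertible M}"
  obtain A' B' where A': "A ** A' = mat 1" "A' ** A = mat 1" and B': "B ** B' = mat 1" "B' ** B = mat 1"
    using A B by (auto simp: invertible_def)
  have "(A ** B) ** (B' ** A') = mat 1"
    by (metis A'(1) B'(1) matrix_mul_assoc matrix_mul_rid)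
  moreover have "(B' ** A') ** (A ** B) = mat 1"
    by (metis A'(2) B'(2) matrix_mul_assoc matrix_mul_rid)
  ultimately show "A ** B \<in> {M. invertible M}" by (auto simp: invertible_def)
  show "\<exists>B\<in>{M. invertible M}. A ** B = mat 1 \<and> B ** A = mat 1"
    using A' by (auto simp: invertible_def)
qed (auto simp: invertible_def)

lemma GL_subgroup_image:
  fixes h :: "'a::comm_ring_1^'n^'n \<Rightarrow> 'b::comm_ring_1^'m^'m"
  assumes "GL_subgroup G"
    and h_mult: "\<And>A B. h (A ** B) = h A ** h B" and h_one: "h (mat 1) = mat 1"
  shows "GL_subgroup (h ` G)"
proof -
  have inverse: "\<exists>B\<in>h ` G. A ** B = mat 1 \<and> B ** A = mat 1" if "A \<in> h ` G" for A
  proof -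
    obtain A0 B0 where "A = h A0" "B0 \<in> G" "A0 ** B0 = mat 1" "B0 ** A0 = mat 1"
      using \<open>A \<in> h ` G\<close> assms(1) unfolding GL_subgroup_def by blast
    then have "h B0 \<in> h ` G" "A ** h B0 = mat 1" "h B0 ** A = mat 1"
      by (simp_all add: h_one flip: h_mult)
    then show ?thesis by blast
  qed
  then have "h ` G \<subseteq> {M. invertible M}" by (auto simp: invertible_def)
  moreover have "A ** B \<in> h ` G" if "A \<in> h ` G" "B \<in> h ` G" for A B
    using that assms(1) unfolding GL_subgroup_def by (auto simp flip: h_mult)
  moreover have "mat 1 \<in> h ` G"
    using assms(1) h_one unfolding GL_subgroup_def by force
  ultimately show ?thesis using inverse unfolding GL_subgroup_def by blast
qed

lemma card_GL_subgroup_dvd: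
  fixes H :: "('a::comm_ring_1^'n^'n) set"
  assumes "GL_subgroup H"
  shows "card H dvd card {M :: 'a^'n^'n. invertible M}"
proof -
  let ?GL = "matrix_group {M :: 'a^'n^'n. invertible M}"
  interpret GL: group ?GL by (rule group_matrix_group[OF GL_subgroup_invertible])
  have "subgroup H ?GL"
  proof (rule GL.subgroupI)
    show "H \<subseteq> carrier ?GL" "H \<noteq> {}"
      using assms by (auto simp: GL_subgroup_def matrix_group_def)
    fix A B assume A: "A \<in> H" and B: "B \<in> H"
    then show "A \<otimes>\<^bsub>?GL\<^esub> B \<in> H"
      using assms by (simp add: GL_subgroup_def matrix_group_def)
    obtain A' where "A' \<in> H" "A ** A' = mat 1" "A' ** A = mat 1"
      using A assms unfolding GL_subgroup_def by blast
    moreover have "A \<in> carrier ?GL" "A' \<in> carrier ?GL"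
      using A \<open>A' \<in> H\<close> assms by (auto simp: GL_subgroup_def matrix_group_def)
    ultimately show "inv\<^bsub>?GL\<^esub> A \<in> H"
      using GL.inv_equality by (simp add: matrix_group_def)
  qed
  from GL.lagrange[OF this] show ?thesis
    by (metis Coset.order_def dvd_triv_right matrix_group_def partial_object.select_convs(1))
qed

lemma GL_subgroup_eval_at_0: "GL_subgroup G \<Longrightarrow> GL_subgroup (eval_at_0 ` G)"
  by (rule GL_subgroup_image[OF _ eval_at_0_mult eval_at_0_mat_1])

lemma dvd_card_eval_at_0_image:
  fixes G :: "('a::idom poly^'n^'n) set"
  assumes G: "GL_subgroup G" "finite G" and d: "d dvd card G" "coprime d CHAR('a)"
  shows "d dvd card (eval_at_0 ` G)"
proof -
  let ?G = "matrix_group G" and ?H = "matrix_group (eval_at_0 ` G)"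
  interpret G: group ?G by (rule group_matrix_group[OF G(1)])
  interpret hom: group_hom ?G ?H eval_at_0
    by (intro group_hom.intro group_hom_axioms.intro G.is_group
        group_matrix_group[OF GL_subgroup_eval_at_0[OF G(1)]])
       (auto simp: hom_def matrix_group_def eval_at_0_mult)
  define K where "K = kernel ?G ?H eval_at_0"
  have K: "subgroup K ?G" "finite K"
    using hom.subgroup_kernel G(2) by (auto simp: K_def kernel_def matrix_group_def)
  have card_G: "card G = card K * card (eval_at_0 ` G)"
    using hom.card_eq_card_kernel_mult_card by (simp add: K_def matrix_group_def)
  have "coprime d (card K)"
  proof (rule ccontr)
    assume "\<not> coprime d (card K)"
    then obtain l where l: "prime l" "l dvd d" "l dvd card K"
      using prime_factor_nat[of "gcd d (card K)"] by (auto simp: coprime_iff_gcd_eq_1)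
    have "of_nat l \<noteq> (0::'a)"
    proof
      assume "of_nat l = (0::'a)"
      then have "CHAR('a) dvd d" using l(2) by (auto simp: of_nat_eq_0_iff_char_dvd intro: dvd_trans)
      then show False using coprime_common_divisor[OF d(2) _ dvd_refl] by simp
    qed
    obtain x where x: "x \<in> K" "x \<noteq> mat 1" "x [^]\<^bsub>?G\<^esub> l = mat 1"
      using G.subgroup_obtain_elem_of_prime_order[OF K l(1,3)] by (auto simp: matrix_group_def)
    have "eval_at_0 x = mat 1" using x(1) by (simp add: K_def kernel_def matrix_group_def)
    moreover have "matpow x l = mat 1" using x(3) by (simp add: nat_pow_matrix_group)
    ultimately have "x = mat 1" using kernel_eval_at_0_torsion_free \<open>of_nat l \<noteq> 0\<close> by blast
    with x(2) show False ..
  qed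
  with d(1) card_G show ?thesis by (metis coprime_dvd_mult_right_iff)
qed

lemma CHAR_eq_if_card_eq_prime_power:
  assumes "prime p" and "CARD('a::{finite,field}) = p ^ e"
  shows "CHAR('a) = p"
proof -
  have "prime CHAR('a)" by (rule prime_CHAR_semidom[OF finite_imp_CHAR_pos]) simp
  moreover have "CHAR('a) dvd p ^ e" using CHAR_dvd_CARD[where ?'a='a] assms(2) by simp
  ultimately show ?thesis
    using assms(1) prime_dvd_power primes_dvd_imp_eq by blast
qed

lemma prime_to_part_dvd_coprime:
  assumes "m > 0"
  shows "prime_to_part m p dvd m" "coprime (prime_to_part m p) p"
proof -
  have "prime_to_part m p \<in> {d. d dvd m \<and> coprime d p}"
    unfolding prime_to_part_def
  proof (rule Max_in)
    show "finite {d. d dvd m \<and> coprime d p}"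
      by (rule finite_subset[of _ "{..m}"]) (use assms in \<open>auto dest: dvd_imp_le\<close>)
  qed auto
  then show "prime_to_part m p dvd m" "coprime (prime_to_part m p) p" by auto
qed

theorem lemma2p12:
  fixes G :: "('a::{finite,field} poly ^ 'n::finite ^ 'n) set"
    and p e :: nat
  assumes "prime p" and "CARD('a) = p ^ e"
    and "GL_subgroup G" and "finite G"
  shows "prime_to_part (card G) p dvd (\<Prod>s=1..CARD('n). CARD('a) ^ s - 1)"
proof -
  define d where "d = prime_to_part (card G) p"
  have "card G > 0" using assms(3,4) by (auto simp: GL_subgroup_def card_gt_0_iff)
  then have d: "d dvd card G" "coprime d p" by (simp_all add: d_def prime_to_part_dvd_coprime)
  have "CHAR('a) = p" using assms(1,2) by (rule CHAR_eq_if_card_eq_prime_power)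
  with d assms(3,4) have "d dvd card (eval_at_0 ` G)" by (simp add: dvd_card_eval_at_0_image)
  also have "\<dots> dvd card {M :: 'a^'n^'n. invertible M}"
    using GL_subgroup_eval_at_0[OF assms(3)] by (rule card_GL_subgroup_dvd)
  also have "\<dots> = (\<Prod>i<CARD('n). CARD('a) ^ i) * (\<Prod>s=1..CARD('n). CARD('a) ^ s - 1)"
    by (simp add: card_invertible_matrices prod_diff_powers_eq)
  finally have "d dvd \<dots>" .
  moreover have "coprime d (\<Prod>i<CARD('n). CARD('a) ^ i)"
    using d(2) assms(2) by (simp add: prod_coprime_right)
  ultimately show ?thesis by (simp add: d_def coprime_dvd_mult_right_iff)
qed

end
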